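(* Let $1<p_1,\ldots,p_m<\infty$ and let $f\in\mathbb{R}^{d_1\times\cdots\times d_m}$, $f\ge0$, be weakly irreducible. Suppose there is $i\in[m]$ such that $(m-1)p_i'\le p_k$ for every $k\in[m]\setminus\{i\}$. Then $f$ has a strictly positive singular vector $\mathbf x^*>0$ with $Q(\mathbf x^* )=\|f\|_{p_1,\ldots,p_m}$.
   Context: $f$ is identified with the multilinear form $f(\mathbf x)=\sum f_{j_1,\ldots,j_m}x_{1,j_1}\cdots x_{m,j_m}$ on $\prod_k\mathbb{R}^{d_k}$. $p'=p/(p-1)$. $Q(\mathbf x)=|f(\mathbf x)|/\prod_k\|\mathbf x_k\|_{p_k}$, $\|f\|_{p_1,\ldots,p_m}=\max Q$; singular vectors are critical points of $Q$ (with $f(\mathbf x)\ne0$). Weak irreducibility: the undirected graph on $\bigcup_k\{k\}\times[d_k]$ with $(k,j_k)\sim(l,j_l)$ ($k\ne l$) iff $f_{j_1,\ldots,j_m}>0$ for some choice of the remaining indices, is connected. *)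

theory Defs
  imports "HOL-Analysis.Analysis"
begin

text \<open>An order-m tensor with dimensions d 0, ..., d (m-1) is a function on
multi-indices J (with J k < d k for k < m); a tuple of vectors x is
x :: nat => nat => real, the k-th vector being x k (entries j < d k).\<close>

definition multi_idx :: "nat \<Rightarrow> (nat \<Rightarrow> nat) \<Rightarrow> (nat \<Rightarrow> nat) set" where
  "multi_idx m d = PiE {0..<m} (\<lambda>k. {0..<d k})"

definition mform :: "nat \<Rightarrow> (nat \<Rightarrow> nat) \<Rightarrow> ((nat \<Rightarrow> nat) \<Rightarrow> real)
    \<Rightarrow> (nat \<Rightarrow> nat \<Rightarrow> real) \<Rightarrow> real" where
  "mform m d f x = (\<Sum>J\<in>multi_idx m d. f J * (\<Prod>k<m. x k (J k)))"

definition pnorm :: "real \<Rightarrow> nat \<Rightarrow> (nat \<Rightarrow> real) \<Rightarrow> real" where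
  "pnorm p n v = (\<Sum>j<n. \<bar>v j\<bar> powr p) powr (1 / p)"

definition Qfun :: "nat \<Rightarrow> (nat \<Rightarrow> nat) \<Rightarrow> (nat \<Rightarrow> real) \<Rightarrow> ((nat \<Rightarrow> nat) \<Rightarrow> real)
    \<Rightarrow> (nat \<Rightarrow> nat \<Rightarrow> real) \<Rightarrow> real" where
  "Qfun m d p f x = \<bar>mform m d f x\<bar> / (\<Prod>k<m. pnorm (p k) (d k) (x k))"

definition admissible :: "nat \<Rightarrow> (nat \<Rightarrow> nat) \<Rightarrow> (nat \<Rightarrow> nat \<Rightarrow> real) \<Rightarrow> bool" where
  "admissible m d x \<longleftrightarrow> (\<forall>k<m. \<exists>j<d k. x k j \<noteq> 0)"

definition tnorm :: "nat \<Rightarrow> (nat \<Rightarrow> nat) \<Rightarrow> (nat \<Rightarrow> real) \<Rightarrow> ((nat \<Rightarrow> nat) \<Rightarrow> real) \<Rightarrow> real" where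
  "tnorm m d p f = Sup {Qfun m d p f x | x. admissible m d x}"

definition critical_Q :: "nat \<Rightarrow> (nat \<Rightarrow> nat) \<Rightarrow> (nat \<Rightarrow> real) \<Rightarrow> ((nat \<Rightarrow> nat) \<Rightarrow> real)
    \<Rightarrow> (nat \<Rightarrow> nat \<Rightarrow> real) \<Rightarrow> bool" where
  "critical_Q m d p f x \<longleftrightarrow> (\<forall>k<m. \<forall>j<d k.
     ((\<lambda>t. Qfun m d p f (x(k := (x k)(j := x k j + t)))) has_real_derivative 0) (at 0))"

definition singular_vector :: "nat \<Rightarrow> (nat \<Rightarrow> nat) \<Rightarrow> (nat \<Rightarrow> real) \<Rightarrow> ((nat \<Rightarrow> nat) \<Rightarrow> real)
    \<Rightarrow> (nat \<Rightarrow> nat \<Rightarrow> real) \<Rightarrow> bool" where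
  "singular_vector m d p f x \<longleftrightarrow>
     admissible m d x \<and> mform m d f x \<noteq> 0 \<and> critical_Q m d p f x"

definition wi_vertices :: "nat \<Rightarrow> (nat \<Rightarrow> nat) \<Rightarrow> (nat \<times> nat) set" where
  "wi_vertices m d = {(k, j). k < m \<and> j < d k}"

definition wi_edge :: "nat \<Rightarrow> (nat \<Rightarrow> nat) \<Rightarrow> ((nat \<Rightarrow> nat) \<Rightarrow> real)
    \<Rightarrow> nat \<times> nat \<Rightarrow> nat \<times> nat \<Rightarrow> bool" where
  "wi_edge m d f u v \<longleftrightarrow> u \<in> wi_vertices m d \<and> v \<in> wi_vertices m d \<and> fst u \<noteq> fst v \<and>
     (\<exists>J\<in>multi_idx m d. J (fst u) = snd u \<and> J (fst v) = snd v \<and> f J > 0)"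

definition weakly_irreducible :: "nat \<Rightarrow> (nat \<Rightarrow> nat) \<Rightarrow> ((nat \<Rightarrow> nat) \<Rightarrow> real) \<Rightarrow> bool" where
  "weakly_irreducible m d f \<longleftrightarrow>
     (\<forall>u\<in>wi_vertices m d. \<forall>v\<in>wi_vertices m d. (wi_edge m d f)\<^sup>*\<^sup>* u v)"

end

theory Submission
  imports Defs
begin

text \<open>Since \<open>f \<ge> 0\<close>, the form attains its maximum \<open>M\<close> over the product of the
\<open>p\<^sub>k\<close>-unit balls at a nonnegative tuple \<open>x\<close>, and by homogeneity \<open>M\<close> is also the maximum of
\<open>Q\<close>, i.e. the norm of \<open>f\<close>. If an entry of \<open>x\<close> vanishes, weak irreducibility yields some
\<open>f\<^sub>J > 0\<close> with \<open>x\<^sub>k(J\<^sub>k) = 0\<close> for some but not all \<open>k\<close>. Raising these zero entries to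
\<open>t powr (1/p\<^sub>k)\<close> increases the form by \<open>c t powr s\<close>, where \<open>s\<close> is the sum of \<open>1/p\<^sub>k\<close> over the
vanishing \<open>k\<close>, while the product of the norms grows at most by the factor \<open>(1 + t) powr s \<le> 1 + t\<close>.
The hypothesis \<open>(m - 1) p\<^sub>i' \<le> p\<^sub>k\<close> forces \<open>s < 1\<close>, so a small \<open>t\<close> contradicts maximality.
Hence \<open>x > 0\<close>, and as an interior maximiser of the differentiable function \<open>Q\<close> it is a critical
point.\<close>

section \<open>Multi-indices and the multilinear form\<close>

lemma multi_idx_mem: "J \<in> multi_idx m d \<Longrightarrow> k < m \<Longrightarrow> J k < d k"
  unfolding multi_idx_def by (auto simp: PiE_iff)

lemma finite_multi_idx: "finite (multi_idx m d)"
  unfolding multi_idx_def by (auto intro: finite_PiE)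

lemma mform_cong:
  assumes "\<And>k j. k < m \<Longrightarrow> j < d k \<Longrightarrow> x k j = y k j"
  shows "mform m d f x = mform m d f y"
proof -
  have "\<And>J. J \<in> multi_idx m d \<Longrightarrow> (\<Prod>k<m. x k (J k)) = (\<Prod>k<m. y k (J k))"
    by (rule prod.cong) (auto intro: assms multi_idx_mem)
  then show ?thesis unfolding mform_def by (intro sum.cong) auto
qed

lemma mform_scale: "mform m d f (\<lambda>k j. c k * x k j) = (\<Prod>k<m. c k) * mform m d f x"
  unfolding mform_def by (simp add: prod.distrib sum_distrib_left ac_simps)

lemma mform_nonneg:
  assumes "\<forall>J\<in>multi_idx m d. f J \<ge> 0" "\<And>k j. k < m \<Longrightarrow> j < d k \<Longrightarrow> 0 \<le> x k j"
  shows "0 \<le> mform m d f x"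
  unfolding mform_def using assms multi_idx_mem
  by (intro sum_nonneg mult_nonneg_nonneg prod_nonneg) auto

lemma abs_mform_le_mform_abs:
  assumes "\<forall>J\<in>multi_idx m d. f J \<ge> 0"
  shows "\<bar>mform m d f x\<bar> \<le> mform m d f (\<lambda>k j. \<bar>x k j\<bar>)"
proof -
  have "\<bar>mform m d f x\<bar> \<le> (\<Sum>J\<in>multi_idx m d. \<bar>f J * (\<Prod>k<m. x k (J k))\<bar>)"
    unfolding mform_def by (rule sum_abs)
  also have "\<dots> = mform m d f (\<lambda>k j. \<bar>x k j\<bar>)"
    unfolding mform_def using assms by (intro sum.cong) (auto simp: abs_mult abs_prod)
  finally show ?thesis .
qed

lemma mform_increase_ge_term:
  assumes "\<forall>J\<in>multi_idx m d. f J \<ge> 0" "\<And>k j. 0 \<le> x k j" "\<And>k j. x k j \<le> y k j"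
    and "J \<in> multi_idx m d"
  shows "mform m d f x + f J * ((\<Prod>k<m. y k (J k)) - (\<Prod>k<m. x k (J k))) \<le> mform m d f y"
proof -
  have term_mono: "0 \<le> f J' * ((\<Prod>k<m. y k (J' k)) - (\<Prod>k<m. x k (J' k)))"
    if "J' \<in> multi_idx m d" for J'
  proof -
    have "(\<Prod>k<m. x k (J' k)) \<le> (\<Prod>k<m. y k (J' k))"
      using assms(2,3) by (intro prod_mono) auto
    then show ?thesis using assms(1) that by simp
  qed
  have "f J * ((\<Prod>k<m. y k (J k)) - (\<Prod>k<m. x k (J k)))
      \<le> (\<Sum>J'\<in>multi_idx m d. f J' * ((\<Prod>k<m. y k (J' k)) - (\<Prod>k<m. x k (J' k))))"
    using assms(4) term_mono finite_multi_idx by (intro member_le_sum) auto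
  also have "\<dots> = mform m d f y - mform m d f x"
    unfolding mform_def by (simp add: right_diff_distrib sum_subtractf)
  finally show ?thesis by simp
qed

lemma mform_unit_tuple:
  assumes J0: "J0 \<in> multi_idx m d"
  shows "mform m d f (\<lambda>k j. if k < m \<and> j = J0 k then 1 else 0) = f J0"
proof -
  have "(\<Prod>k<m. if k < m \<and> J k = J0 k then 1 else 0) = (if J = J0 then 1 else (0::real))"
    if J: "J \<in> multi_idx m d" for J
  proof (cases "J = J0")
    case False
    then obtain k where k: "J k \<noteq> J0 k" by auto
    with J J0 have "k < m" unfolding multi_idx_def by (metis PiE_arb atLeastLessThan_iff zero_le)
    then have "(\<Prod>k<m. (if k < m \<and> J k = J0 k then 1 else (0::real))) = 0"
      using k by (intro prod_zero) auto
    then show ?thesis using False by simp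
  qed simp
  then have "mform m d f (\<lambda>k j. if k < m \<and> j = J0 k then 1 else 0)
      = (\<Sum>J\<in>multi_idx m d. if J = J0 then f J else 0)"
    unfolding mform_def by (intro sum.cong) auto
  also have "\<dots> = f J0" using J0 finite_multi_idx[of m d] by (simp add: sum.delta')
  finally show ?thesis .
qed

lemma admissible_of_mform_nonzero:
  assumes "mform m d f x \<noteq> 0"
  shows "admissible m d x"
  unfolding admissible_def
proof (intro allI impI, rule ccontr)
  fix k assume k: "k < m" and "\<not> (\<exists>j<d k. x k j \<noteq> 0)"
  then have zero: "\<And>j. j < d k \<Longrightarrow> x k j = 0" by auto
  have "mform m d f x = 0" unfolding mform_def
  proof (intro sum.neutral ballI)
    fix J assume "J \<in> multi_idx m d"
    then have "J k < d k" using k by (rule multi_idx_mem)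
    then have "(\<Prod>k<m. x k (J k)) = 0" using zero k by (intro prod_zero bexI[of _ k]) auto
    then show "f J * (\<Prod>k<m. x k (J k)) = 0" by simp
  qed
  with assms show False by simp
qed

lemma admissible_mono:
  assumes "admissible m d x" "\<And>k j. 0 \<le> x k j" "\<And>k j. x k j \<le> y k j"
  shows "admissible m d y"
  using assms unfolding admissible_def by (metis antisym)

lemma continuous_on_apply2 [continuous_intros]:
  "continuous_on S (\<lambda>x::nat \<Rightarrow> nat \<Rightarrow> real. x k j)"
proof -
  have "continuous_on UNIV ((\<lambda>y::nat \<Rightarrow> real. y j) \<circ> (\<lambda>x::nat \<Rightarrow> nat \<Rightarrow> real. x k))"
    by (rule continuous_on_compose)
      (auto intro: continuous_on_subset[OF continuous_on_product_coordinates])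
  then show ?thesis by (auto simp add: o_def intro: continuous_on_subset)
qed

lemma continuous_on_mform: "continuous_on S (mform m d f)"
  unfolding mform_def by (intro continuous_intros)

section \<open>The \<open>p\<close>-norms and their unit balls\<close>

lemma pnorm_pos:
  assumes "0 < p" "j < n" "v j \<noteq> 0"
  shows "0 < pnorm p n v"
proof -
  have "0 < (\<Sum>j<n. \<bar>v j\<bar> powr p)"
    using assms by (intro sum_pos2[of _ j]) auto
  then show ?thesis unfolding pnorm_def by simp
qed

lemma pnorm_nonneg: "0 \<le> pnorm p n v"
  by (simp add: pnorm_def)

lemma pnorm_le_1:
  assumes "0 < p" "(\<Sum>j<n. \<bar>v j\<bar> powr p) \<le> 1"
  shows "pnorm p n v \<le> 1"
  unfolding pnorm_def using assms by (intro powr_le1) (auto simp: sum_nonneg)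

lemma pnorm_powr:
  assumes "0 < p"
  shows "pnorm p n v powr p = (\<Sum>j<n. \<bar>v j\<bar> powr p)"
  unfolding pnorm_def using assms by (simp add: powr_powr sum_nonneg)

lemma pnorm_update_zero_entry:
  assumes p: "0 < p" and v: "(\<Sum>j<n. \<bar>v j\<bar> powr p) \<le> 1" and j: "j < n" "v j = 0"
    and t: "0 \<le> t"
  shows "pnorm p n (v(j := t powr (1 / p))) \<le> (1 + t) powr (1 / p)"
proof -
  have "(\<Sum>i<n. \<bar>(v(j := t powr (1 / p))) i\<bar> powr p)
      = \<bar>t powr (1 / p)\<bar> powr p + (\<Sum>i\<in>{..<n} - {j}. \<bar>v i\<bar> powr p)"
    using j by (simp add: sum.remove)
  also have "\<dots> = t + (\<Sum>i<n. \<bar>v i\<bar> powr p)"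
    using p t j by (simp add: powr_powr sum_diff1)
  finally have "(\<Sum>i<n. \<bar>(v(j := t powr (1 / p))) i\<bar> powr p) \<le> 1 + t"
    using v by simp
  then show ?thesis
    unfolding pnorm_def using p by (intro powr_mono2) (auto intro: sum_nonneg)
qed

definition unit_balls :: "nat \<Rightarrow> (nat \<Rightarrow> nat) \<Rightarrow> (nat \<Rightarrow> real) \<Rightarrow> (nat \<Rightarrow> nat \<Rightarrow> real) set" where
  "unit_balls m d p = {x. (\<forall>k j. \<not> (k < m \<and> j < d k) \<longrightarrow> x k j = 0) \<and>
     (\<forall>k<m. (\<Sum>j<d k. \<bar>x k j\<bar> powr p k) \<le> 1)}"

lemma unit_tuple_in_unit_balls:
  assumes "J0 \<in> multi_idx m d"
  shows "(\<lambda>k j. if k < m \<and> j = J0 k then 1 else 0) \<in> unit_balls m d p"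
proof -
  have "(\<Sum>j<d k. \<bar>if k < m \<and> j = J0 k then 1 else 0::real\<bar> powr p k) = 1" if "k < m" for k
  proof -
    have "(\<Sum>j<d k. \<bar>if k < m \<and> j = J0 k then 1 else 0::real\<bar> powr p k)
        = (\<Sum>j<d k. if j = J0 k then 1 else 0)"
      using that by (intro sum.cong) auto
    then show ?thesis using multi_idx_mem[OF assms that] by simp
  qed
  then show ?thesis using multi_idx_mem[OF assms] by (auto simp: unit_balls_def)
qed

lemma abs_in_unit_balls: "x \<in> unit_balls m d p \<Longrightarrow> (\<lambda>k j. \<bar>x k j\<bar>) \<in> unit_balls m d p"
  by (simp add: unit_balls_def)

lemma prod_pnorm_le_1:
  assumes "\<forall>k<m. 0 < p k" "x \<in> unit_balls m d p"
  shows "(\<Prod>k<m. pnorm (p k) (d k) (x k)) \<le> 1"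
  using assms by (intro prod_le_1 conjI pnorm_nonneg pnorm_le_1) (auto simp: unit_balls_def)

lemma prod_pnorm_pos:
  assumes "\<forall>k<m. 0 < p k" "admissible m d x"
  shows "0 < (\<Prod>k<m. pnorm (p k) (d k) (x k))"
  using assms unfolding admissible_def by (intro prod_pos) (auto intro: pnorm_pos)

lemma prod_pnorm_raise_zero_entries:
  assumes p: "\<forall>k<m. 0 < p k" and x: "x \<in> unit_balls m d p" and K: "K \<subseteq> {..<m}"
    and zero: "\<And>k. k \<in> K \<Longrightarrow> J k < d k \<and> x k (J k) = 0" and t: "0 \<le> t"
  shows "(\<Prod>k<m. pnorm (p k) (d k) (if k \<in> K then (x k)(J k := t powr (1 / p k)) else x k))
         \<le> (1 + t) powr (\<Sum>k\<in>K. 1 / p k)"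
proof -
  define g where "g k = (if k \<in> K then (1 + t) powr (1 / p k) else 1)" for k
  have "pnorm (p k) (d k) (if k \<in> K then (x k)(J k := t powr (1 / p k)) else x k) \<le> g k"
    if "k < m" for k
    using that x p zero t unfolding g_def unit_balls_def
    by (auto intro: pnorm_update_zero_entry pnorm_le_1)
  then have "(\<Prod>k<m. pnorm (p k) (d k) (if k \<in> K then (x k)(J k := t powr (1 / p k)) else x k))
      \<le> (\<Prod>k<m. g k)"
    by (intro prod_mono conjI pnorm_nonneg) auto
  also have "(\<Prod>k<m. g k) = (\<Prod>k\<in>K. (1 + t) powr (1 / p k))"
    using K by (simp add: g_def prod.If_cases Int_absorb1)
  also have "\<dots> = (1 + t) powr (\<Sum>k\<in>K. 1 / p k)"
    using t by (simp add: powr_sum)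
  finally show ?thesis .
qed

lemma compact_PiE_PiE:
  fixes C :: "nat \<Rightarrow> nat \<Rightarrow> real set"
  assumes "\<And>k j. compact (C k j)"
  shows "compact (PiE UNIV (\<lambda>k. PiE UNIV (\<lambda>j. C k j)))"
proof -
  have "\<And>k. compactin euclidean (PiE UNIV (\<lambda>j. C k j))"
    using assms by (simp flip: euclidean_product_topology add: compactin_PiE)
  then have "compactin (product_topology (\<lambda>k. euclidean) UNIV) (PiE UNIV (\<lambda>k. PiE UNIV (\<lambda>j. C k j)))"
    by (simp add: compactin_PiE)
  then show ?thesis by (simp add: euclidean_product_topology)
qed

lemma compact_unit_balls:
  assumes p: "\<forall>k<m. 0 < p k"
  shows "compact (unit_balls m d p)"
proof -
  define C where "C k j = (if k < m \<and> j < d k then {-1..1::real} else {0})" for k j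
  define Box where "Box = PiE UNIV (\<lambda>k. PiE UNIV (\<lambda>j. C k j))"
  define Ball where "Ball = (\<Inter>k<m. {x::nat \<Rightarrow> nat \<Rightarrow> real. (\<Sum>j<d k. \<bar>x k j\<bar> powr p k) \<le> 1})"
  have "compact Box" unfolding Box_def by (rule compact_PiE_PiE) (auto simp: C_def)
  moreover have "closed Ball" unfolding Ball_def using p
    by (intro closed_INT ballI closed_Collect_le continuous_on_sum continuous_on_powr'
        continuous_intros) auto
  moreover have "unit_balls m d p = Box \<inter> Ball"
  proof (intro equalityI subsetI)
    fix x assume x: "x \<in> unit_balls m d p"
    have "\<bar>x k j\<bar> \<le> 1" if "k < m" "j < d k" for k j
    proof -
      have "\<bar>x k j\<bar> powr p k \<le> (\<Sum>j<d k. \<bar>x k j\<bar> powr p k)"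
        using that by (intro member_le_sum) auto
      also have "\<dots> \<le> 1" using x that by (auto simp: unit_balls_def)
      finally show ?thesis using p that by (metis gr_one_powr not_le)
    qed
    then show "x \<in> Box \<inter> Ball"
      using x by (auto simp: Box_def Ball_def C_def unit_balls_def PiE_iff abs_le_iff)
  qed (auto simp: Box_def Ball_def C_def unit_balls_def PiE_iff split: if_splits)
  ultimately show ?thesis by (simp add: compact_Int_closed)
qed

section \<open>The maximum of the form on the unit balls\<close>

lemma exists_nonneg_mform_maximizer:
  assumes f0: "\<forall>J\<in>multi_idx m d. f J \<ge> 0" and p: "\<forall>k<m. 0 < p k"
  obtains x where "x \<in> unit_balls m d p" "\<And>k j. 0 \<le> x k j"
    "\<And>z. z \<in> unit_balls m d p \<Longrightarrow> mform m d f z \<le> mform m d f x"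
proof -
  have "(\<lambda>k j. 0) \<in> unit_balls m d p" using p by (simp add: unit_balls_def)
  then obtain x0 where x0: "x0 \<in> unit_balls m d p"
    and max: "\<forall>z\<in>unit_balls m d p. mform m d f z \<le> mform m d f x0"
    using continuous_attains_sup[OF compact_unit_balls[OF p] _ continuous_on_mform] by blast
  have "mform m d f z \<le> mform m d f (\<lambda>k j. \<bar>x0 k j\<bar>)" if "z \<in> unit_balls m d p" for z
    using max that abs_mform_le_mform_abs[OF f0, of x0] by fastforce
  then show ?thesis using that abs_in_unit_balls[OF x0] by simp
qed

lemma Qfun_le_mform_max:
  assumes f0: "\<forall>J\<in>multi_idx m d. f J \<ge> 0" and p: "\<forall>k<m. 0 < p k"
    and max: "\<And>z. z \<in> unit_balls m d p \<Longrightarrow> mform m d f z \<le> M"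
    and y: "admissible m d y"
  shows "Qfun m d p f y \<le> M"
proof -
  define n where "n k = pnorm (p k) (d k) (y k)" for k
  have n_pos: "0 < n k" if "k < m" for k
    using y p that unfolding admissible_def n_def by (auto intro: pnorm_pos)
  define z where "z k j = (if k < m \<and> j < d k then \<bar>y k j\<bar> / n k else 0)" for k j
  have "(\<Sum>j<d k. \<bar>z k j\<bar> powr p k) = 1" if k: "k < m" for k
  proof -
    have "(\<Sum>j<d k. \<bar>z k j\<bar> powr p k) = (\<Sum>j<d k. \<bar>y k j\<bar> powr p k) / n k powr p k"
      using k n_pos[OF k] by (auto simp: z_def powr_divide sum_divide_distrib intro!: sum.cong)
    also have "(\<Sum>j<d k. \<bar>y k j\<bar> powr p k) = n k powr p k"
      using p k by (simp add: n_def pnorm_powr)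
    also have "n k powr p k / n k powr p k = 1"
      using n_pos[OF k] by simp
    finally show ?thesis .
  qed
  then have z: "z \<in> unit_balls m d p" by (auto simp: unit_balls_def z_def)
  have "mform m d f (\<lambda>k j. \<bar>y k j\<bar>) = mform m d f (\<lambda>k j. n k * z k j)"
    using n_pos by (intro mform_cong) (force simp: z_def)
  also have "\<dots> = (\<Prod>k<m. n k) * mform m d f z" by (rule mform_scale)
  finally have "\<bar>mform m d f y\<bar> \<le> (\<Prod>k<m. n k) * mform m d f z"
    using abs_mform_le_mform_abs[OF f0, of y] by simp
  also have "\<dots> \<le> (\<Prod>k<m. n k) * M"
    using max[OF z] n_pos by (intro mult_left_mono prod_nonneg) (auto intro: less_imp_le)
  finally show ?thesis
    using prod_pnorm_pos[OF p y] unfolding Qfun_def n_def by (simp add: pos_divide_le_eq mult.commute)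
qed

lemma abs_mform_le_Qfun:
  assumes "\<forall>k<m. 0 < p k" "x \<in> unit_balls m d p" "admissible m d x"
  shows "\<bar>mform m d f x\<bar> \<le> Qfun m d p f x"
  using prod_pnorm_le_1[OF assms(1,2)] prod_pnorm_pos[OF assms(1,3)]
  unfolding Qfun_def by (simp add: le_divide_eq mult_left_le)

lemma mform_le_of_Qfun_le:
  assumes "\<forall>k<m. 0 < p k" "admissible m d y" "Qfun m d p f y \<le> M"
  shows "mform m d f y \<le> M * (\<Prod>k<m. pnorm (p k) (d k) (y k))"
  using assms(3) prod_pnorm_pos[OF assms(1,2)] unfolding Qfun_def
  by (simp add: pos_divide_le_eq)

lemma tnorm_eq_Qfun_maximum:
  assumes "admissible m d x" "\<And>y. admissible m d y \<Longrightarrow> Qfun m d p f y \<le> Qfun m d p f x"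
  shows "tnorm m d p f = Qfun m d p f x"
  unfolding tnorm_def using assms by (intro cSup_eq_maximum) auto

section \<open>Zero entries of a maximiser\<close>

lemma powr_dominates_linear_near_0:
  fixes a c s :: real
  assumes "0 < a" "0 < c" "s < 1"
  shows "\<exists>t>0. a * t < c * t powr s"
proof -
  define t where "t = (c / (2 * a)) powr (1 / (1 - s))"
  have t: "0 < t" unfolding t_def using assms by simp
  have "2 * (a * t) = 2 * a * t powr (1 - s) * t powr s"
    using t by (simp flip: powr_add)
  also have "2 * a * t powr (1 - s) = c"
    unfolding t_def using assms by (simp add: powr_powr)
  finally have "2 * (a * t) = c * t powr s" .
  moreover have "0 < a * t" using t assms by simp
  ultimately have "a * t < c * t powr s" by linarith
  with t show ?thesis by blast
qed

lemma maximizer_zero_entries_weight: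
  assumes f0: "\<forall>J\<in>multi_idx m d. f J \<ge> 0" and p: "\<forall>k<m. 0 < p k"
    and x_nonneg: "\<And>k j. 0 \<le> x k j" and x: "x \<in> unit_balls m d p"
    and M: "mform m d f x = M" "0 < M"
    and max: "\<And>y. admissible m d y \<Longrightarrow> Qfun m d p f y \<le> M"
    and J: "J \<in> multi_idx m d" "f J > 0" and k: "k < m" "x k (J k) = 0"
  shows "1 \<le> (\<Sum>q | q < m \<and> x q (J q) = 0. 1 / p q)"
proof (rule ccontr)
  define K where "K = {q. q < m \<and> x q (J q) = 0}"
  define s where "s = (\<Sum>q\<in>K. 1 / p q)"
  assume "\<not> 1 \<le> (\<Sum>q | q < m \<and> x q (J q) = 0. 1 / p q)"
  then have s: "s < 1" by (simp add: s_def K_def)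
  define c where "c = f J * (\<Prod>q\<in>{..<m} - K. x q (J q))"
  have c: "0 < c" unfolding c_def using J(2) x_nonneg
    by (intro mult_pos_pos prod_pos) (auto simp: K_def order.not_eq_order_implies_strict)
  obtain t where t: "0 < t" "M * t < c * t powr s"
    using powr_dominates_linear_near_0[OF M(2) c s] by blast
  define y where "y q = (if q \<in> K then (x q)(J q := t powr (1 / p q)) else x q)" for q
  have xy: "x q j \<le> y q j" for q j using t by (auto simp: y_def K_def)
  have "(\<Prod>q<m. y q (J q)) = (\<Prod>q\<in>{..<m} - K. y q (J q)) * (\<Prod>q\<in>K. y q (J q))"
    by (rule prod.subset_diff) (auto simp: K_def)
  also have "(\<Prod>q\<in>K. y q (J q)) = (\<Prod>q\<in>K. t powr (1 / p q))"
    by (intro prod.cong) (auto simp: y_def)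
  also have "\<dots> = t powr s" unfolding s_def using t by (simp add: powr_sum)
  also have "(\<Prod>q\<in>{..<m} - K. y q (J q)) = (\<Prod>q\<in>{..<m} - K. x q (J q))"
    by (intro prod.cong) (auto simp: y_def)
  finally have "f J * (\<Prod>q<m. y q (J q)) = c * t powr s" by (simp add: c_def)
  moreover have "(\<Prod>q<m. x q (J q)) = 0" using k by (intro prod_zero bexI[of _ k]) auto
  moreover have "mform m d f x + f J * ((\<Prod>q<m. y q (J q)) - (\<Prod>q<m. x q (J q)))
      \<le> mform m d f y"
    by (intro mform_increase_ge_term f0 x_nonneg xy J(1))
  ultimately have "M + c * t powr s \<le> mform m d f y"
    using M(1) by (simp only: diff_zero)
  moreover have "mform m d f y \<le> M * (1 + t)"
  proof -
    have "admissible m d x" using admissible_of_mform_nonzero[of m d f x] M by simp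
    then have y_adm: "admissible m d y" using x_nonneg xy by (rule admissible_mono)
    have "(\<Prod>q<m. pnorm (p q) (d q) (y q)) \<le> (1 + t) powr s"
      unfolding y_def s_def using p x J(1) t multi_idx_mem
      by (intro prod_pnorm_raise_zero_entries) (auto simp: K_def)
    also have "\<dots> \<le> 1 + t" using s t powr_mono[of s 1 "1 + t"] by simp
    finally have "(\<Prod>q<m. pnorm (p q) (d q) (y q)) \<le> 1 + t" .
    then show ?thesis
      using mform_le_of_Qfun_le[OF p y_adm max[OF y_adm]] M(2)
      by (meson mult_left_mono less_imp_le order_trans)
  qed
  ultimately show False using t by (simp add: algebra_simps)
qed

lemma sum_inverse_exponents_lt_1:
  fixes p :: "nat \<Rightarrow> real"
  assumes m: "m \<ge> 2" and p: "\<forall>k<m. 1 < p k" and i: "i < m"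
    and exponents: "\<forall>k<m. k \<noteq> i \<longrightarrow> real (m - 1) * (p i / (p i - 1)) \<le> p k" and l: "l < m"
  shows "(\<Sum>k\<in>{..<m} - {l}. 1 / p k) < 1"
proof -
  define a where "a = (1 - 1 / p i) / real (m - 1)"
  have pi: "1 < p i" using p i by auto
  have m1: "0 < real (m - 1)" using m by simp
  have a_pos: "0 < a" unfolding a_def using pi m1 by simp
  have a_m: "real (m - 1) * a = 1 - 1 / p i" unfolding a_def using m1 by simp
  have a_bound: "1 / p k \<le> a" if "k < m" "k \<noteq> i" for k
  proof -
    have pos: "0 < real (m - 1) * (p i / (p i - 1))" using pi m1 by simp
    have pk: "0 < p k" using p that by auto
    have le: "real (m - 1) * (p i / (p i - 1)) \<le> p k" using exponents that by auto
    have "1 / p k \<le> 1 / (real (m - 1) * (p i / (p i - 1)))"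
      using divide_left_mono[OF le zero_le_one mult_pos_pos[OF pk pos]] .
    also have "\<dots> = a" unfolding a_def using pi m1 by (simp add: field_simps)
    finally show ?thesis .
  qed
  show ?thesis
  proof (cases "l = i")
    case True
    have "(\<Sum>k\<in>{..<m} - {l}. 1 / p k) \<le> real (card ({..<m} - {l})) * a"
      by (rule sum_bounded_above) (use True a_bound in auto)
    also have "card ({..<m} - {l}) = m - 1" using l by simp
    also have "real (m - 1) * a < 1" using a_m pi by simp
    finally show ?thesis .
  next
    case False
    then have "{..<m} - {l} = insert i ({..<m} - {i, l})" using i by auto
    then have "(\<Sum>k\<in>{..<m} - {l}. 1 / p k) = (\<Sum>k\<in>insert i ({..<m} - {i, l}). 1 / p k)"
      by (simp only:)
    also have "\<dots> = 1 / p i + (\<Sum>k\<in>{..<m} - {i, l}. 1 / p k)" by (rule sum.insert) auto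
    also have "\<dots> \<le> 1 / p i + real (card ({..<m} - {i, l})) * a"
      by (rule add_left_mono, rule sum_bounded_above) (use a_bound in auto)
    also have "card ({..<m} - {i, l}) = m - 2" using i l False by (subst card_Diff_subset) auto
    also have "real (m - 2) * a < real (m - 1) * a"
      using a_pos m by (intro mult_strict_right_mono) auto
    finally show ?thesis using a_m by simp
  qed
qed

lemma rtranclp_exit_step:
  assumes "R\<^sup>*\<^sup>* u v" "P u" "\<not> P v"
  shows "\<exists>a b. R a b \<and> P a \<and> \<not> P b"
  using assms by (induction rule: rtranclp_induct) auto

lemma weakly_irreducible_positive_entry:
  assumes "m \<ge> 2" "\<forall>k<m. d k \<ge> 1" "weakly_irreducible m d f"
  shows "\<exists>J\<in>multi_idx m d. f J > 0"
proof -
  have "d 0 \<ge> 1" "d 1 \<ge> 1" using assms(1,2) by auto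
  then have "(0, 0) \<in> wi_vertices m d" "(1, 0) \<in> wi_vertices m d"
    using assms(1) by (auto simp: wi_vertices_def)
  then have "(wi_edge m d f)\<^sup>*\<^sup>* (0, 0) (1, 0)"
    using assms(3) unfolding weakly_irreducible_def by blast
  then obtain w where "wi_edge m d f (0, 0) w" by (rule converse_rtranclpE) auto
  then show ?thesis unfolding wi_edge_def by blast
qed

text \<open>A zero entry of an admissible maximiser lies in the same block as a nonzero one, so a path
of the irreducibility graph leaves the zero set along some \<open>f J > 0\<close>; the zero entries of \<open>J\<close>
then miss the block of the exit vertex, so their exponent weight stays below 1.\<close>

lemma maximizer_positive:
  assumes m: "m \<ge> 2" and p: "\<forall>k<m. 1 < p k" and i: "i < m"
    and exponents: "\<forall>k<m. k \<noteq> i \<longrightarrow> real (m - 1) * (p i / (p i - 1)) \<le> p k"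
    and f0: "\<forall>J\<in>multi_idx m d. f J \<ge> 0" and wi: "weakly_irreducible m d f"
    and x_nonneg: "\<And>k j. 0 \<le> x k j" and x: "x \<in> unit_balls m d p"
    and M: "mform m d f x = M" "0 < M"
    and max: "\<And>y. admissible m d y \<Longrightarrow> Qfun m d p f y \<le> M"
    and kj: "k < m" "j < d k"
  shows "0 < x k j"
proof (rule ccontr)
  assume "\<not> 0 < x k j"
  then have zero: "x k j = 0" using x_nonneg[of k j] by simp
  obtain j1 where j1: "j1 < d k" "x k j1 \<noteq> 0"
    using admissible_of_mform_nonzero[of m d f x] M kj unfolding admissible_def by auto
  have "(wi_edge m d f)\<^sup>*\<^sup>* (k, j) (k, j1)"
    using wi kj j1 unfolding weakly_irreducible_def wi_vertices_def by blast
  from rtranclp_exit_step[OF this, of "\<lambda>v. x (fst v) (snd v) = 0"] zero j1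
  obtain a b where ab: "wi_edge m d f a b" "x (fst a) (snd a) = 0" "x (fst b) (snd b) \<noteq> 0"
    by auto
  then obtain J where J: "J \<in> multi_idx m d" "J (fst a) = snd a" "J (fst b) = snd b" "f J > 0"
    and a: "fst a < m" and b: "fst b < m"
    unfolding wi_edge_def wi_vertices_def by auto
  have "1 \<le> (\<Sum>q | q < m \<and> x q (J q) = 0. 1 / p q)"
    using p ab J a by (intro maximizer_zero_entries_weight[OF f0 _ x_nonneg x M max J(1,4)]) auto
  also have "\<dots> \<le> (\<Sum>q\<in>{..<m} - {fst b}. 1 / p q)"
    using p ab J by (intro sum_mono2) (auto intro: less_imp_le)
  also have "\<dots> < 1" by (rule sum_inverse_exponents_lt_1[OF m p i exponents b])
  finally show False by simp
qed

section \<open>Criticality of a positive maximiser\<close>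

lemma differentiable_prod [derivative_intros]:
  fixes f :: "'i \<Rightarrow> real \<Rightarrow> real"
  assumes "\<And>i. i \<in> I \<Longrightarrow> f i differentiable (at x)"
  shows "(\<lambda>t. \<Prod>i\<in>I. f i t) differentiable (at x)"
proof -
  obtain D where "\<And>i. i \<in> I \<Longrightarrow> (f i has_real_derivative D i) (at x)"
    using assms unfolding real_differentiable_def by metis
  then show ?thesis
    unfolding real_differentiable_def by (blast intro: has_field_derivative_prod)
qed

lemma differentiable_powr_const [derivative_intros]:
  fixes g :: "real \<Rightarrow> real"
  assumes "g differentiable (at x)" "0 < g x"
  shows "(\<lambda>t. g t powr c) differentiable (at x)"
  using assms DERIV_powr[OF _ _ DERIV_const] unfolding real_differentiable_def by blast

lemma Qfun_differentiable_positive_curve: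
  fixes e :: "real \<Rightarrow> nat \<Rightarrow> nat \<Rightarrow> real"
  assumes f0: "\<forall>J\<in>multi_idx m d. f J \<ge> 0" and d: "\<forall>k<m. d k \<ge> 1"
    and e_diff: "\<And>q i. (\<lambda>t. e t q i) differentiable (at 0)" and \<delta>: "0 < \<delta>"
    and e_pos: "\<And>t q i. \<bar>t\<bar> < \<delta> \<Longrightarrow> q < m \<Longrightarrow> i < d q \<Longrightarrow> 0 < e t q i"
  shows "(\<lambda>t. Qfun m d p f (e t)) differentiable (at 0)"
proof -
  define S where "S q t = (\<Sum>i<d q. e t q i powr p q)" for q t
  have S_pos: "0 < S q t" if "\<bar>t\<bar> < \<delta>" "q < m" for q t
  proof -
    have "0 < d q" using d that(2) by (auto simp: Suc_le_eq)
    then show ?thesis unfolding S_def using e_pos[OF that \<open>0 < d q\<close>]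
      by (intro sum_pos2[of _ 0]) auto
  qed
  have Q_eq: "Qfun m d p f (e t) = mform m d f (e t) / (\<Prod>q<m. S q t powr (1 / p q))"
    if "\<bar>t\<bar> < \<delta>" for t
  proof -
    have "0 \<le> mform m d f (e t)"
      using e_pos[OF that] by (intro mform_nonneg[OF f0] less_imp_le)
    moreover have "(\<Prod>q<m. pnorm (p q) (d q) (e t q)) = (\<Prod>q<m. S q t powr (1 / p q))"
      unfolding pnorm_def S_def using e_pos[OF that]
      by (intro prod.cong refl arg_cong2[where f="(powr)"] sum.cong) (auto intro: abs_of_pos)
    ultimately show ?thesis unfolding Qfun_def by simp
  qed
  have S0_pos: "0 < S q 0" if "q < m" for q
    using S_pos[OF _ that, of 0] \<delta> by simp
  have den_pos: "0 < (\<Prod>q<m. S q 0 powr (1 / p q))"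
  proof (intro prod_pos ballI)
    fix q assume "q \<in> {..<m}"
    then show "0 < S q 0 powr (1 / p q)" using S0_pos[of q] by simp
  qed
  have "(\<lambda>t. S q t) differentiable (at 0)" if "q < m" for q
    unfolding S_def using e_pos[of 0] \<delta> that
    by (intro differentiable_sum finite_lessThan ballI differentiable_powr_const e_diff) auto
  then have den_diff: "(\<lambda>t. \<Prod>q<m. S q t powr (1 / p q)) differentiable (at 0)"
    by (intro differentiable_prod differentiable_powr_const S0_pos) auto
  have num_diff: "(\<lambda>t. mform m d f (e t)) differentiable (at 0)"
    unfolding mform_def
    by (intro differentiable_sum finite_multi_idx ballI differentiable_mult differentiable_const
        differentiable_prod e_diff)
  have "(\<lambda>t. mform m d f (e t) / (\<Prod>q<m. S q t powr (1 / p q))) differentiable (at 0)"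
    using differentiable_divide[OF num_diff den_diff not_sym[OF less_imp_neq[OF den_pos]]] .
  then show ?thesis
    by (rule differentiable_transform_within[OF _ \<delta>]) (auto simp: Q_eq dist_real_def)
qed

lemma Qfun_differentiable_along_coordinate:
  assumes f0: "\<forall>J\<in>multi_idx m d. f J \<ge> 0" and d: "\<forall>k<m. d k \<ge> 1"
    and x_pos: "\<And>k j. k < m \<Longrightarrow> j < d k \<Longrightarrow> 0 < x k j" and kj: "k < m" "j < d k"
  shows "(\<lambda>t. Qfun m d p f (x(k := (x k)(j := x k j + t)))) differentiable (at 0)"
proof -
  define e where "e t q i = x q i + (if q = k \<and> i = j then t else 0)" for t q i
  have "x(k := (x k)(j := x k j + t)) = e t" for t
    by (auto simp: e_def fun_eq_iff)
  moreover have "(\<lambda>t. Qfun m d p f (e t)) differentiable (at 0)"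
  proof (rule Qfun_differentiable_positive_curve[OF f0 d _ x_pos[OF kj]])
    show "(\<lambda>t. e t q i) differentiable (at 0)" for q i
      unfolding e_def by (cases "q = k \<and> i = j") (auto intro!: derivative_intros)
    show "0 < e t q i" if "\<bar>t\<bar> < x k j" "q < m" "i < d q" for t q i
      using x_pos[OF that(2,3)] that(1) by (auto simp: e_def)
  qed
  ultimately show ?thesis by simp
qed

lemma critical_Q_of_positive_maximum:
  assumes f0: "\<forall>J\<in>multi_idx m d. f J \<ge> 0" and d: "\<forall>k<m. d k \<ge> 1"
    and x_pos: "\<And>k j. k < m \<Longrightarrow> j < d k \<Longrightarrow> 0 < x k j"
    and max: "\<And>y. admissible m d y \<Longrightarrow> Qfun m d p f y \<le> Qfun m d p f x"
  shows "critical_Q m d p f x"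
  unfolding critical_Q_def
proof (intro allI impI)
  fix k j assume kj: "k < m" "j < d k"
  define G where "G = (\<lambda>t. Qfun m d p f (x(k := (x k)(j := x k j + t))))"
  have "G differentiable (at 0)"
    unfolding G_def using x_pos kj by (intro Qfun_differentiable_along_coordinate[OF f0 d])
  then obtain D where D: "(G has_real_derivative D) (at 0)"
    unfolding real_differentiable_def by blast
  have "G t \<le> G 0" if "\<bar>0 - t\<bar> < x k j" for t
  proof -
    have "admissible m d (x(k := (x k)(j := x k j + t)))"
      unfolding admissible_def
    proof (intro allI impI)
      fix q assume q: "q < m"
      then have "0 < d q" using d by (auto simp: Suc_le_eq)
      then show "\<exists>i<d q. (x(k := (x k)(j := x k j + t))) q i \<noteq> 0"
        using x_pos[OF q \<open>0 < d q\<close>] x_pos[OF kj] that by (intro exI[of _ 0]) auto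
    qed
    then show ?thesis using max by (simp add: G_def)
  qed
  then have "D = 0" using DERIV_local_max[OF D x_pos[OF kj]] by blast
  then show "((\<lambda>t. Qfun m d p f (x(k := (x k)(j := x k j + t)))) has_real_derivative 0) (at 0)"
    using D by (simp only: G_def)
qed

theorem theorem5:
  fixes m :: nat and d :: "nat \<Rightarrow> nat" and p :: "nat \<Rightarrow> real"
    and f :: "(nat \<Rightarrow> nat) \<Rightarrow> real"
  assumes "m \<ge> 2"
    and "\<forall>k<m. d k \<ge> 1"
    and "\<forall>k<m. 1 < p k"
    and "\<forall>J\<in>multi_idx m d. f J \<ge> 0"
    and "weakly_irreducible m d f"
    and "\<exists>i<m. \<forall>k<m. k \<noteq> i \<longrightarrow> real (m - 1) * (p i / (p i - 1)) \<le> p k"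
  shows "\<exists>x. (\<forall>k<m. \<forall>j<d k. x k j > 0) \<and> singular_vector m d p f x
             \<and> Qfun m d p f x = tnorm m d p f"
proof -
  note m = assms(1) and d = assms(2) and p1 = assms(3) and f0 = assms(4) and wi = assms(5)
  obtain i where i: "i < m"
    and exponents: "\<forall>k<m. k \<noteq> i \<longrightarrow> real (m - 1) * (p i / (p i - 1)) \<le> p k"
    using assms(6) by blast
  have p: "\<forall>k<m. 0 < p k" using p1 by auto
  obtain x where x: "x \<in> unit_balls m d p" and x_nonneg: "\<And>k j. 0 \<le> x k j"
    and x_max: "\<And>z. z \<in> unit_balls m d p \<Longrightarrow> mform m d f z \<le> mform m d f x"
    using exists_nonneg_mform_maximizer[OF f0 p] by blast
  define M where "M = mform m d f x"
  obtain J0 where "J0 \<in> multi_idx m d" "f J0 > 0"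
    using weakly_irreducible_positive_entry[OF m d wi] by blast
  then have M_pos: "0 < M"
    using x_max[OF unit_tuple_in_unit_balls] mform_unit_tuple unfolding M_def by fastforce
  have Q_le: "\<And>y. admissible m d y \<Longrightarrow> Qfun m d p f y \<le> M"
    using Qfun_le_mform_max[OF f0 p] x_max unfolding M_def by blast
  have adm: "admissible m d x"
    using M_pos admissible_of_mform_nonzero[of m d f x] unfolding M_def by simp
  have Q_x: "Qfun m d p f x = M"
    using Q_le[OF adm] abs_mform_le_Qfun[OF p x adm, of f] abs_of_pos[OF M_pos]
    unfolding M_def by linarith
  have x_pos: "\<And>k j. k < m \<Longrightarrow> j < d k \<Longrightarrow> 0 < x k j"
    using maximizer_positive[OF m p1 i exponents f0 wi x_nonneg x _ M_pos Q_le] M_def by blast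
  have "critical_Q m d p f x"
    using Q_le Q_x by (intro critical_Q_of_positive_maximum[OF f0 d x_pos]) auto
  moreover have "tnorm m d p f = Qfun m d p f x"
    using adm Q_le Q_x by (intro tnorm_eq_Qfun_maximum) auto
  ultimately show ?thesis
    using x_pos adm M_pos Q_x unfolding singular_vector_def M_def by (intro exI[of _ x]) auto
qed

end
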